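(* Let $t \geq 4$ and $n \geq 1$ be integers, let $t' = [t/2]$, $x = \left[\frac{nt'-1}{t'-1}\right]$, and write $x-2 = tq + r$ with integers $q$ and $0 \leq r \leq t-1$. Let $R = R_{t-2,t}(K_{1,n})$. Then $R = x$ if and only if one of the following conditions holds: (a) $r = t-1$ and $x$ and $q+1$ are odd; (b) $r < t-2$ and $t \leq 2r+4$ and $t$ is even; (c) $r < t-2$ and $q+r+3 < t \leq 2q+2r+5$ and $t$ is odd.
   Context: $[a]$ denotes the integer part (floor) of a real number $a$. $K_{1,n}$ is the star with $n$ edges. For a graph $G$ and integers $1 \leq s < t$, $R_{s,t}(G)$ is the smallest positive integer $N$ such that every coloring of the edges of the complete graph $K_N$ with $t$ colors contains a (not necessarily induced) subgraph isomorphic to $G$ whose edges use at most $s$ distinct colors. *)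

theory Defs
  imports Complex_Main
begin

text \<open>A finite simple graph is given by a vertex set V and a set E of 2-element subsets of V.
  A copy of (V,E) in K_N (vertices {..<N}) is an injective map f from V into {..<N};
  its edges are the images f ` e for e in E.  An edge colouring of K_N with t colours
  is a map c from edges ({u,v} with u \<noteq> v, u,v < N) to {..<t}.\<close>

definition edge_colouring :: "nat \<Rightarrow> nat \<Rightarrow> (nat set \<Rightarrow> nat) \<Rightarrow> bool" where
  "edge_colouring N t c \<longleftrightarrow>
     (\<forall>u<N. \<forall>v<N. u \<noteq> v \<longrightarrow> c {u, v} < t)"

definition has_few_coloured_copy ::
  "'a set \<Rightarrow> 'a set set \<Rightarrow> nat \<Rightarrow> nat \<Rightarrow> (nat set \<Rightarrow> nat) \<Rightarrow> bool" where
  "has_few_coloured_copy V E s N c \<longleftrightarrow>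
     (\<exists>f. inj_on f V \<and> f ` V \<subseteq> {..<N} \<and> card ((\<lambda>e. c (f ` e)) ` E) \<le> s)"

definition ramsey_st :: "nat \<Rightarrow> nat \<Rightarrow> 'a set \<Rightarrow> 'a set set \<Rightarrow> nat" where
  "ramsey_st s t V E = (LEAST N. 0 < N \<and>
     (\<forall>c. edge_colouring N t c \<longrightarrow> has_few_coloured_copy V E s N c))"

definition star_V :: "nat \<Rightarrow> nat set" where
  "star_V n = {0..n}"

definition star_E :: "nat \<Rightarrow> nat set set" where
  "star_E n = {{0, i} | i. i \<in> {1..n}}"

end

theory Submission
  imports Defs
begin

text \<open>A \<open>t\<close>-colouring of \<open>K_N\<close> has no star \<open>K_{1,n}\<close> in at most \<open>t - 2\<close> colours exactly when, at
  every vertex, any two colour degrees add up to at least \<open>N - n\<close>: the leaves of such a star avoid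
  two colours. Summing over the colours at one vertex gives \<open>2(N - 1) \<ge> t(N - n)\<close>, slightly
  sharpened when \<open>N - n\<close> is odd; in case of equality every colour class is regular of degree
  \<open>(N - n)/2\<close>, which the handshake lemma forbids when \<open>N\<close> and \<open>(N - n)/2\<close> are odd. Conversely,
  reducing modulo \<open>t\<close> a colouring with \<open>M\<close> classes each met equally often at every vertex (the
  near 1-factorisation by \<open>u + w mod M\<close>, or the circulant colouring by circular distance) makes
  every two colour degrees sum to at least \<open>2\<lfloor>M/t\<rfloor>\<close>, plus one if \<open>M \<equiv> t - 1 (mod t)\<close>. Writing
  \<open>x - 2 = tq + r\<close>, the floor defining \<open>x\<close> pins \<open>x - n\<close> down to about \<open>2q\<close>, and conditions (a)-(c)
  say exactly when these bounds meet at \<open>x\<close>.\<close>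

section \<open>Colour degrees and few-coloured stars\<close>

definition colour_degree :: "(nat set \<Rightarrow> nat) \<Rightarrow> nat \<Rightarrow> nat \<Rightarrow> nat \<Rightarrow> nat" where
  "colour_degree c N v k = card {w. w < N \<and> w \<noteq> v \<and> c {v, w} = k}"

definition star_avoidable :: "nat \<Rightarrow> nat \<Rightarrow> nat \<Rightarrow> bool" where
  "star_avoidable t n N \<longleftrightarrow>
     (\<exists>c. edge_colouring N t c \<and> \<not> has_few_coloured_copy (star_V n) (star_E n) (t - 2) N c)"

lemma star_E_eq_image: "star_E n = (\<lambda>i. {0, i}) ` {1..n}"
  by (auto simp: star_E_def)

lemma few_coloured_star_centre_leaves:
  assumes "has_few_coloured_copy (star_V n) (star_E n) s N c"
  obtains v L where "v < N" "L \<subseteq> {..<N} - {v}" "card L = n" "card ((\<lambda>w. c {v, w}) ` L) \<le> s"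
proof -
  obtain f where inj: "inj_on f {0..n}" and range: "f ` {0..n} \<subseteq> {..<N}"
    and few: "card ((\<lambda>e. c (f ` e)) ` star_E n) \<le> s"
    using assms unfolding has_few_coloured_copy_def star_V_def by blast
  have centre: "f 0 < N"
    using range by (auto simp: image_subset_iff)
  have leaves: "f ` {1..n} \<subseteq> {..<N} - {f 0}"
  proof
    fix w assume "w \<in> f ` {1..n}"
    then obtain i where "i \<in> {1..n}" "w = f i" by blast
    then show "w \<in> {..<N} - {f 0}"
      using range inj_onD[OF inj, of i 0] by (auto simp: image_subset_iff)
  qed
  have card: "card (f ` {1..n}) = n"
    using inj by (simp add: card_image inj_on_subset)
  have "(\<lambda>e. c (f ` e)) ` star_E n = (\<lambda>w. c {f 0, w}) ` f ` {1..n}"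
    by (auto simp: star_E_eq_image image_image)
  with few have "card ((\<lambda>w. c {f 0, w}) ` f ` {1..n}) \<le> s"
    by simp
  then show ?thesis
    by (rule that[OF centre leaves card])
qed

lemma few_coloured_star_of_centre_leaves:
  assumes v: "v < N" and L: "L \<subseteq> {..<N} - {v}" "card L = n"
    and few: "card ((\<lambda>w. c {v, w}) ` L) \<le> s"
  shows "has_few_coloured_copy (star_V n) (star_E n) s N c"
proof -
  have "finite L"
    using L(1) finite_subset by blast
  then obtain g where g: "bij_betw g {1..n} L"
    using L(2) ex_bij_betw_nat_finite_1 by blast
  define f where "f = g(0 := v)"
  have f_eq: "f ` {1..n} = L" "\<And>i. i \<in> {1..n} \<Longrightarrow> f i = g i"
    using g by (auto simp: f_def bij_betw_def)
  have "inj_on f {1..n}"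
    using g f_eq(2) inj_on_cong[of "{1..n}" f g] by (simp add: bij_betw_def)
  moreover have "f 0 \<notin> f ` ({1..n} - {0})"
    using L(1) f_eq(1) by (auto simp: f_def)
  ultimately have "inj_on f (insert 0 {1..n})"
    unfolding inj_on_insert by blast
  moreover have zero_to_n: "{0..n} = insert 0 {1..n}"
    by auto
  ultimately have inj: "inj_on f {0..n}"
    by simp
  have "f ` {0..n} = insert v L"
    unfolding zero_to_n image_insert f_eq(1) by (simp add: f_def)
  then have range: "f ` {0..n} \<subseteq> {..<N}"
    using v L(1) by auto
  have "\<And>i. i \<in> {1..n} \<Longrightarrow> f ` {0, i} = {v, f i}"
    by (auto simp: f_def)
  then have "(\<lambda>e. c (f ` e)) ` star_E n = (\<lambda>w. c {v, w}) ` f ` {1..n}"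
    unfolding star_E_eq_image image_image by simp
  then have "card ((\<lambda>e. c (f ` e)) ` star_E n) \<le> s"
    using few by (simp only: f_eq(1))
  then show ?thesis
    unfolding has_few_coloured_copy_def star_V_def using inj range by blast
qed

lemma card_other_colours:
  assumes "v < N" "k1 \<noteq> k2"
  shows "card {w. w < N \<and> w \<noteq> v \<and> c {v, w} \<notin> {k1, k2}}
           + colour_degree c N v k1 + colour_degree c N v k2 = N - 1"
proof -
  let ?W = "{w. w < N \<and> w \<noteq> v \<and> c {v, w} \<notin> {k1, k2}}"
  let ?D = "\<lambda>k. {w. w < N \<and> w \<noteq> v \<and> c {v, w} = k}"
  have "N - 1 = card ({..<N} - {v})"
    using assms(1) by simp
  also have "{..<N} - {v} = ?W \<union> ?D k1 \<union> ?D k2"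
    by auto
  also have "card (?W \<union> ?D k1 \<union> ?D k2) = card ?W + card (?D k1) + card (?D k2)"
    using assms(2) by (subst card_Un_disjoint, auto, subst card_Un_disjoint, auto)
  finally show ?thesis
    unfolding colour_degree_def by simp
qed

lemma sum_colour_degree:
  assumes "edge_colouring N t c" "v < N"
  shows "(\<Sum>k<t. colour_degree c N v k) = N - 1"
proof -
  let ?D = "\<lambda>k. {w. w < N \<and> w \<noteq> v \<and> c {v, w} = k}"
  have "N - 1 = card ({..<N} - {v})"
    using assms(2) by simp
  also have "{..<N} - {v} = (\<Union>k<t. ?D k)"
    using assms unfolding edge_colouring_def by auto
  also have "card (\<Union>k<t. ?D k) = (\<Sum>k<t. card (?D k))"
    by (rule card_UN_disjoint) auto
  finally show ?thesis
    unfolding colour_degree_def by simp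
qed

lemma colour_degree_bound_if_no_few_coloured_star:
  assumes colouring: "edge_colouring N t c"
    and no_star: "\<not> has_few_coloured_copy (star_V n) (star_E n) (t - 2) N c"
    and v: "v < N" and k: "k1 < t" "k2 < t" "k1 \<noteq> k2"
  shows "N \<le> colour_degree c N v k1 + colour_degree c N v k2 + n"
proof (rule ccontr)
  let ?W = "{w. w < N \<and> w \<noteq> v \<and> c {v, w} \<notin> {k1, k2}}"
  assume "\<not> N \<le> colour_degree c N v k1 + colour_degree c N v k2 + n"
  then have "n \<le> card ?W"
    using card_other_colours[OF v k(3), of c] by linarith
  then obtain L where L: "L \<subseteq> ?W" "card L = n"
    by (meson obtain_subset_with_card_n)
  have "(\<lambda>w. c {v, w}) ` L \<subseteq> {..<t} - {k1, k2}"
    using L(1) v colouring unfolding edge_colouring_def by auto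
  then have "card ((\<lambda>w. c {v, w}) ` L) \<le> card ({..<t} - {k1, k2})"
    by (simp add: card_mono)
  also have "\<dots> = t - 2"
    using k by simp
  finally have "has_few_coloured_copy (star_V n) (star_E n) (t - 2) N c"
    using L by (intro few_coloured_star_of_centre_leaves[OF v]) auto
  then show False
    using no_star by contradiction
qed

lemma no_few_coloured_star_if_colour_degree_bound:
  assumes colouring: "edge_colouring N t c" and "2 \<le> t"
    and degrees: "\<And>v k1 k2. v < N \<Longrightarrow> k1 < t \<Longrightarrow> k2 < t \<Longrightarrow> k1 \<noteq> k2 \<Longrightarrow>
       N \<le> colour_degree c N v k1 + colour_degree c N v k2 + n"
  shows "\<not> has_few_coloured_copy (star_V n) (star_E n) (t - 2) N c"
proof
  assume "has_few_coloured_copy (star_V n) (star_E n) (t - 2) N c"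
  then obtain v L where v: "v < N" and L: "L \<subseteq> {..<N} - {v}" "card L = n"
    and few: "card ((\<lambda>w. c {v, w}) ` L) \<le> t - 2"
    by (rule few_coloured_star_centre_leaves)
  let ?C = "(\<lambda>w. c {v, w}) ` L"
  have "?C \<subseteq> {..<t}"
    using L(1) v colouring unfolding edge_colouring_def by auto
  then have "card ({..<t} - ?C) = t - card ?C"
    by (simp add: card_Diff_subset finite_subset)
  then have "2 \<le> card ({..<t} - ?C)"
    using few \<open>2 \<le> t\<close> by linarith
  then obtain k1 k2 where k: "k1 \<in> {..<t} - ?C" "k2 \<in> {..<t} - ?C" "k1 \<noteq> k2"
    by (auto simp: numeral_2_eq_2 card_le_Suc_iff)
  then have "L \<subseteq> {w. w < N \<and> w \<noteq> v \<and> c {v, w} \<notin> {k1, k2}}"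
    using L(1) by auto
  then have "n \<le> card {w. w < N \<and> w \<noteq> v \<and> c {v, w} \<notin> {k1, k2}}"
    using L(2) card_mono[of "{w. w < N \<and> w \<noteq> v \<and> c {v, w} \<notin> {k1, k2}}" L] by simp
  moreover have "N \<le> colour_degree c N v k1 + colour_degree c N v k2 + n"
    using degrees v k by simp
  ultimately show False
    using card_other_colours[OF v k(3), of c] v by linarith
qed

lemma star_avoidable_iff_colour_degree_bound:
  assumes "2 \<le> t"
  shows "star_avoidable t n N \<longleftrightarrow> (\<exists>c. edge_colouring N t c \<and>
    (\<forall>v<N. \<forall>k1<t. \<forall>k2<t. k1 \<noteq> k2 \<longrightarrow> N \<le> colour_degree c N v k1 + colour_degree c N v k2 + n))"
proof
  assume "star_avoidable t n N"
  then obtain c where "edge_colouring N t c"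
    "\<not> has_few_coloured_copy (star_V n) (star_E n) (t - 2) N c"
    unfolding star_avoidable_def by blast
  then show "\<exists>c. edge_colouring N t c \<and> (\<forall>v<N. \<forall>k1<t. \<forall>k2<t. k1 \<noteq> k2 \<longrightarrow>
      N \<le> colour_degree c N v k1 + colour_degree c N v k2 + n)"
    using colour_degree_bound_if_no_few_coloured_star by blast
next
  assume "\<exists>c. edge_colouring N t c \<and> (\<forall>v<N. \<forall>k1<t. \<forall>k2<t. k1 \<noteq> k2 \<longrightarrow>
      N \<le> colour_degree c N v k1 + colour_degree c N v k2 + n)"
  then obtain c where "edge_colouring N t c" and "\<forall>v<N. \<forall>k1<t. \<forall>k2<t. k1 \<noteq> k2 \<longrightarrow>
      N \<le> colour_degree c N v k1 + colour_degree c N v k2 + n"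
    by blast
  then show "star_avoidable t n N"
    unfolding star_avoidable_def using no_few_coloured_star_if_colour_degree_bound assms by blast
qed

lemma star_avoidable_mono:
  assumes "star_avoidable t n N" "N' \<le> N"
  shows "star_avoidable t n N'"
proof -
  obtain c where colouring: "edge_colouring N t c"
    and no_star: "\<not> has_few_coloured_copy (star_V n) (star_E n) (t - 2) N c"
    using assms(1) unfolding star_avoidable_def by blast
  have "edge_colouring N' t c"
    using colouring assms(2) unfolding edge_colouring_def by simp
  moreover have "\<not> has_few_coloured_copy (star_V n) (star_E n) (t - 2) N' c"
  proof
    assume "has_few_coloured_copy (star_V n) (star_E n) (t - 2) N' c"
    moreover have "{..<N'} \<subseteq> {..<N}"
      using assms(2) by auto
    ultimately have "has_few_coloured_copy (star_V n) (star_E n) (t - 2) N c"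
      unfolding has_few_coloured_copy_def by (meson subset_trans)
    then show False
      using no_star by contradiction
  qed
  ultimately show ?thesis
    unfolding star_avoidable_def by blast
qed

lemma star_avoidable_if_le:
  assumes "N \<le> n" "2 \<le> t"
  shows "star_avoidable t n N"
proof -
  have "edge_colouring N t (\<lambda>_. 0)"
    using assms(2) unfolding edge_colouring_def by simp
  then show ?thesis
    using assms by (auto simp: star_avoidable_iff_colour_degree_bound)
qed

section \<open>Counting and parity bounds\<close>

text \<open>Here \<open>\<mu>\<close> is the least of \<open>k\<close> values whose pairwise sums are at least \<open>m\<close>; the other
  values are then at least \<open>max \<mu> (m - \<mu>)\<close>.\<close>
lemma min_max_pair_bound:
  fixes k m \<mu> :: nat
  assumes "2 \<le> k"
  shows "k * m + m mod 2 * (k - 2) \<le> 2 * (\<mu> + (k - 1) * max \<mu> (m - \<mu>))"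
proof (cases "m \<le> 2 * \<mu>")
  case True
  have "k * m + m mod 2 * (k - 2) \<le> k * (2 * \<mu>)"
  proof (cases "even m")
    case even: True
    then show ?thesis using True by simp
  next
    case odd: False
    then have "m + 1 \<le> 2 * \<mu>"
      using True odd by (metis dvd_triv_left le_eq_less_or_eq Suc_leI Suc_eq_plus1)
    then have "k * (m + 1) \<le> k * (2 * \<mu>)"
      by (rule mult_le_mono2)
    moreover have "m mod 2 * (k - 2) \<le> k"
      using odd by (simp add: odd_iff_mod_2_eq_one)
    ultimately show ?thesis
      by (simp add: algebra_simps)
  qed
  also have "\<dots> = 2 * (\<mu> + (k - 1) * \<mu>)"
    using assms by (cases k) (auto simp: algebra_simps)
  also have "\<dots> \<le> 2 * (\<mu> + (k - 1) * max \<mu> (m - \<mu>))"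
    by simp
  finally show ?thesis .
next
  case False
  define p where "p = m - 2 * \<mu>"
  have p: "m = 2 * \<mu> + p" "max \<mu> (m - \<mu>) = \<mu> + p"
    using False unfolding p_def by auto
  have "p mod 2 * (k - 2) \<le> p * (k - 2)"
    by (simp add: mult_le_mono1)
  then have "k * m + m mod 2 * (k - 2) \<le> k * (2 * \<mu> + p) + p * (k - 2)"
    using p(1) by (simp add: mod_add_left_eq)
  also have "\<dots> = 2 * (\<mu> + (k - 1) * (\<mu> + p))"
    using assms by (cases k; cases "k - 1") (auto simp: algebra_simps)
  finally show ?thesis
    using p(2) by simp
qed

lemma pairwise_sum_bound:
  fixes d :: "'a \<Rightarrow> nat"
  assumes "finite K" "2 \<le> card K"
    and pairs: "\<And>a b. a \<in> K \<Longrightarrow> b \<in> K \<Longrightarrow> a \<noteq> b \<Longrightarrow> m \<le> d a + d b"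
  shows "card K * m + m mod 2 * (card K - 2) \<le> 2 * sum d K"
proof -
  obtain a where a: "a \<in> K" "d a = Min (d ` K)"
    using assms(1,2) Min_in[of "d ` K"] by fastforce
  let ?M = "max (d a) (m - d a)"
  have "?M \<le> d b" if b: "b \<in> K - {a}" for b
  proof -
    have "d a \<le> d b"
      using b assms(1) by (simp add: a(2))
    moreover have "m \<le> d a + d b"
      using pairs[of a b] a(1) b by blast
    ultimately show ?thesis
      by simp
  qed
  then have "card (K - {a}) * ?M \<le> sum d (K - {a})"
    using sum_bounded_below[of "K - {a}" ?M d] by simp
  moreover have "sum d K = d a + sum d (K - {a})"
    using a(1) assms(1) by (simp add: sum.remove)
  moreover have "card (K - {a}) = card K - 1"
    using a(1) assms(1) by simp
  ultimately have "2 * (d a + (card K - 1) * ?M) \<le> 2 * sum d K"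
    by simp
  then show ?thesis
    using min_max_pair_bound[OF assms(2), of m "d a"] by linarith
qed

lemma even_card_if_sym_irrefl:
  fixes R :: "('a::linorder \<times> 'a) set"
  assumes "finite R" "sym R" "irrefl R"
  shows "even (card R)"
proof -
  let ?R1 = "{p \<in> R. fst p < snd p}"
  have split: "R = ?R1 \<union> prod.swap ` ?R1"
  proof (intro equalityI subsetI)
    fix p assume "p \<in> R"
    moreover obtain a b where p: "p = (a, b)" by fastforce
    ultimately have "(b, a) \<in> R" "a \<noteq> b"
      using assms(2,3) by (auto simp: sym_def irrefl_def)
    show "p \<in> ?R1 \<union> prod.swap ` ?R1"
    proof (cases "a < b")
      case True
      then show ?thesis using \<open>p \<in> R\<close> p by simp
    next
      case False
      then have "(b, a) \<in> ?R1"
        using \<open>(b, a) \<in> R\<close> \<open>a \<noteq> b\<close> by simp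
      then show ?thesis
        using p by (simp add: image_iff)
    qed
  next
    fix p assume "p \<in> ?R1 \<union> prod.swap ` ?R1"
    then show "p \<in> R"
      using assms(2) by (auto simp: sym_def)
  qed
  have "card (?R1 \<union> prod.swap ` ?R1) = card ?R1 + card (prod.swap ` ?R1)"
    by (rule card_Un_disjoint) (use assms(1) in auto)
  also have "card (prod.swap ` ?R1) = card ?R1"
    by (simp add: card_image)
  finally show ?thesis
    unfolding split[symmetric] by simp
qed

lemma even_sum_colour_degree: "even (\<Sum>v<N. colour_degree c N v k)"
proof -
  let ?R = "SIGMA v:{..<N}. {w. w < N \<and> w \<noteq> v \<and> c {v, w} = k}"
  have "(\<Sum>v<N. colour_degree c N v k) = card ?R"
    unfolding colour_degree_def by simp
  also have "even (card ?R)"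
  proof (rule even_card_if_sym_irrefl)
    show "finite ?R"
      by (rule finite_subset[of _ "{..<N} \<times> {..<N}"]) auto
    show "sym ?R" "irrefl ?R"
      by (auto simp: sym_def irrefl_def insert_commute)
  qed
  finally show ?thesis .
qed

lemma not_star_avoidable_by_counting:
  assumes "2 \<le> t" "n < N"
    and "2 * (N - 1) < t * (N - n) + (N - n) mod 2 * (t - 2)"
  shows "\<not> star_avoidable t n N"
proof
  assume "star_avoidable t n N"
  then obtain c where colouring: "edge_colouring N t c"
    and degrees: "\<forall>v<N. \<forall>k1<t. \<forall>k2<t. k1 \<noteq> k2 \<longrightarrow>
       N \<le> colour_degree c N v k1 + colour_degree c N v k2 + n"
    unfolding star_avoidable_iff_colour_degree_bound[OF assms(1)] by blast
  have "card {..<t} * (N - n) + (N - n) mod 2 * (card {..<t} - 2)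
          \<le> 2 * (\<Sum>k<t. colour_degree c N 0 k)"
  proof (rule pairwise_sum_bound)
    fix a b assume "a \<in> {..<t}" "b \<in> {..<t}" "a \<noteq> b"
    then show "N - n \<le> colour_degree c N 0 a + colour_degree c N 0 b"
      using degrees assms(2) by fastforce
  qed (use assms(1) in simp_all)
  then show False
    using sum_colour_degree[OF colouring, of 0] assms by simp
qed

lemma colour_degree_eq_if_tight:
  assumes colouring: "edge_colouring N t c" and "3 \<le> t" "v < N" "k < t"
    and degrees: "\<And>k1 k2. k1 < t \<Longrightarrow> k2 < t \<Longrightarrow> k1 \<noteq> k2 \<Longrightarrow>
       N \<le> colour_degree c N v k1 + colour_degree c N v k2 + n"
    and tight: "2 * (N - 1) = t * (N - n)"
  shows "2 * colour_degree c N v k = N - n"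
proof -
  define m where "m = N - n"
  define d where "d = colour_degree c N v"
  have total: "sum d {..<t} = N - 1"
    unfolding d_def using sum_colour_degree[OF colouring \<open>v < N\<close>] .
  have upper: "2 * d j \<le> m" if "j < t" for j
  proof -
    have "card ({..<t} - {j}) * m + m mod 2 * (card ({..<t} - {j}) - 2)
            \<le> 2 * sum d ({..<t} - {j})"
    proof (rule pairwise_sum_bound)
      fix a b assume "a \<in> {..<t} - {j}" "b \<in> {..<t} - {j}" "a \<noteq> b"
      then show "m \<le> d a + d b"
        using degrees[of a b] unfolding m_def d_def by simp
    qed (use \<open>3 \<le> t\<close> that in simp_all)
    moreover have "sum d {..<t} = d j + sum d ({..<t} - {j})"
      using that by (simp add: sum.remove)
    moreover have "t * m = (t - 1) * m + m"
      using \<open>3 \<le> t\<close> by (cases t) auto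
    ultimately show ?thesis
      using that total tight unfolding m_def by simp
  qed
  have "(\<Sum>j<t. m - 2 * d j) = (\<Sum>j<t. m) - (\<Sum>j<t. 2 * d j)"
    by (rule sum_subtractf_nat) (use upper in simp)
  also have "\<dots> = t * m - 2 * sum d {..<t}"
    by (simp add: sum_distrib_left)
  also have "\<dots> = 0"
    using total tight unfolding m_def by simp
  finally have "m - 2 * d k = 0"
    using \<open>k < t\<close> by simp
  then show ?thesis
    using upper[OF \<open>k < t\<close>] unfolding m_def d_def by simp
qed

lemma not_star_avoidable_by_parity:
  assumes "3 \<le> t" "n < N" "odd N"
    and tight: "2 * (N - 1) = t * (N - n)" and "odd ((N - n) div 2)"
  shows "\<not> star_avoidable t n N"
proof
  assume "star_avoidable t n N"
  moreover have "2 \<le> t"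
    using assms(1) by simp
  ultimately obtain c where colouring: "edge_colouring N t c"
    and degrees: "\<forall>v<N. \<forall>k1<t. \<forall>k2<t. k1 \<noteq> k2 \<longrightarrow>
       N \<le> colour_degree c N v k1 + colour_degree c N v k2 + n"
    using star_avoidable_iff_colour_degree_bound by blast
  have "2 * colour_degree c N v 0 = N - n" if "v < N" for v
    by (rule colour_degree_eq_if_tight[OF colouring \<open>3 \<le> t\<close> that _ _ tight])
      (use assms(1) degrees that in auto)
  then have "colour_degree c N v 0 = (N - n) div 2" if "v < N" for v
    using that by fastforce
  then have "(\<Sum>v<N. colour_degree c N v 0) = N * ((N - n) div 2)"
    by simp
  moreover have "even (\<Sum>v<N. colour_degree c N v 0)"
    by (rule even_sum_colour_degree)
  ultimately show False
    using assms(3,5) by simp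
qed

lemma not_star_avoidable_twice:
  assumes "4 \<le> t" "1 \<le> n"
  shows "\<not> star_avoidable t n (2 * n)"
proof (rule not_star_avoidable_by_counting)
  have "4 * n \<le> t * n"
    using assms(1) by simp
  then have "2 * (2 * n - 1) < t * n"
    using assms(2) by linarith
  then show "2 * (2 * n - 1) < t * (2 * n - n) + (2 * n - n) mod 2 * (t - 2)"
    by simp
qed (use assms in auto)

section \<open>The Ramsey number as a threshold\<close>

lemma ramsey_star_eq_Least:
  "ramsey_st (t - 2) t (star_V n) (star_E n) = (LEAST N. 0 < N \<and> \<not> star_avoidable t n N)"
  unfolding ramsey_st_def star_avoidable_def by simp

lemma ramsey_star_eq_iff:
  assumes "4 \<le> t" "1 \<le> n" "0 < X"
  shows "ramsey_st (t - 2) t (star_V n) (star_E n) = X \<longleftrightarrow>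
    star_avoidable t n (X - 1) \<and> \<not> star_avoidable t n X"
proof
  assume "ramsey_st (t - 2) t (star_V n) (star_E n) = X"
  then have X: "X = (LEAST N. 0 < N \<and> \<not> star_avoidable t n N)"
    by (simp add: ramsey_star_eq_Least)
  have "\<not> star_avoidable t n (2 * n)"
    using assms(1,2) by (rule not_star_avoidable_twice)
  then have "0 < X \<and> \<not> star_avoidable t n X"
    unfolding X using assms(2) LeastI[of "\<lambda>N. 0 < N \<and> \<not> star_avoidable t n N" "2 * n"] by simp
  moreover have "star_avoidable t n (X - 1)"
  proof (cases "X = 1")
    case True
    then show ?thesis
      using assms(1) by (simp add: star_avoidable_if_le)
  next
    case False
    then show ?thesis
      using not_less_Least[of "X - 1" "\<lambda>N. 0 < N \<and> \<not> star_avoidable t n N"] X assms(3) by simp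
  qed
  ultimately show "star_avoidable t n (X - 1) \<and> \<not> star_avoidable t n X"
    by simp
next
  assume X: "star_avoidable t n (X - 1) \<and> \<not> star_avoidable t n X"
  show "ramsey_st (t - 2) t (star_V n) (star_E n) = X"
    unfolding ramsey_star_eq_Least
  proof (rule Least_equality)
    fix N assume "0 < N \<and> \<not> star_avoidable t n N"
    then show "X \<le> N"
      using X star_avoidable_mono[of t n "X - 1" N] by fastforce
  qed (use X assms(3) in simp)
qed

section \<open>Colourings by residue classes\<close>

definition residue_count :: "nat \<Rightarrow> nat \<Rightarrow> nat \<Rightarrow> nat" where
  "residue_count t M k = card {i. i < M \<and> i mod t = k}"

text \<open>The least value of \<open>residue_count t M k1 + residue_count t M k2\<close> over distinct residues
  \<open>k1, k2 < t\<close>.\<close>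
definition residue_pair_bound :: "nat \<Rightarrow> nat \<Rightarrow> nat" where
  "residue_pair_bound t M = 2 * (M div t) + (if M mod t = t - 1 then 1 else 0)"

lemma residue_count_ge:
  assumes "0 < t" "k < t"
  shows "M div t + (if k < M mod t then 1 else 0) \<le> residue_count t M k"
proof -
  let ?J = "{..<M div t + (if k < M mod t then 1 else 0)}"
  have "(\<lambda>j. j * t + k) ` ?J \<subseteq> {i. i < M \<and> i mod t = k}"
  proof (rule image_subsetI)
    fix j assume j: "j \<in> ?J"
    have "j * t + k < M"
    proof (cases "j < M div t")
      case True
      then have "j * t + t \<le> M div t * t"
        by (metis Suc_leI add.commute mult_Suc mult_le_mono1)
      then show ?thesis
        using assms(2) div_times_less_eq_dividend[of M t] by linarith
    next
      case False
      then have "j = M div t" "k < M mod t"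
        using j by (auto split: if_splits)
      then show ?thesis
        by (metis add_less_cancel_left div_mult_mod_eq)
    qed
    then show "j * t + k \<in> {i. i < M \<and> i mod t = k}"
      using assms(2) by simp
  qed
  moreover have "inj_on (\<lambda>j. j * t + k) ?J"
    using assms(1) by (intro inj_onI) simp
  ultimately show ?thesis
    unfolding residue_count_def using card_inj_on_le[of _ ?J] by fastforce
qed

lemma residue_pair_bound_le:
  assumes "0 < t" "k1 < t" "k2 < t" "k1 \<noteq> k2"
  shows "residue_pair_bound t M \<le> residue_count t M k1 + residue_count t M k2"
proof -
  have "M mod t = t - 1 \<Longrightarrow> k1 < M mod t \<or> k2 < M mod t"
    using assms by auto
  then show ?thesis
    using residue_count_ge[OF assms(1,2), of M] residue_count_ge[OF assms(1,3), of M]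
    unfolding residue_pair_bound_def by (auto split: if_splits)
qed

lemma residue_pair_bound_ge:
  assumes "0 < t" "t * Q \<le> M"
  shows "2 * Q \<le> residue_pair_bound t M"
proof -
  have "Q \<le> M div t"
    using assms div_le_mono[OF assms(2), of t] by simp
  then show ?thesis
    unfolding residue_pair_bound_def by simp
qed

lemma residue_pair_bound_top:
  assumes "0 < t"
  shows "residue_pair_bound t (t * Q + (t - 1)) = 2 * Q + 1"
proof -
  have "t * Q + (t - 1) = (t - 1) + Q * t"
    by simp
  moreover have "((t - 1) + Q * t) div t = Q + (t - 1) div t"
    using assms by (intro div_mult_self1) simp
  moreover have "((t - 1) + Q * t) mod t = (t - 1) mod t"
    by (rule mod_mult_self1)
  ultimately have "(t * Q + (t - 1)) div t = Q" "(t * Q + (t - 1)) mod t = t - 1"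
    using assms by simp_all
  then show ?thesis
    unfolding residue_pair_bound_def by simp
qed

lemma colour_degree_mod_ge:
  assumes "\<And>i. i < M \<Longrightarrow> r \<le> card {w. w < N \<and> w \<noteq> v \<and> g {v, w} = i}"
  shows "r * residue_count t M k \<le> colour_degree (\<lambda>S. g S mod t) N v k"
proof -
  let ?I = "{i. i < M \<and> i mod t = k}"
  let ?D = "\<lambda>i. {w. w < N \<and> w \<noteq> v \<and> g {v, w} = i}"
  have "r * card ?I \<le> (\<Sum>i\<in>?I. card (?D i))"
    using sum_bounded_below[of ?I r "\<lambda>i. card (?D i)"] assms by (simp add: mult.commute)
  also have "\<dots> = card (\<Union>i\<in>?I. ?D i)"
    by (rule card_UN_disjoint[symmetric]) auto
  also have "\<dots> \<le> colour_degree (\<lambda>S. g S mod t) N v k"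
    unfolding colour_degree_def by (rule card_mono) auto
  finally show ?thesis
    unfolding residue_count_def .
qed

lemma exists_add_mod_eq:
  fixes v i M :: nat
  assumes "v < M" "i < M"
  shows "\<exists>w<M. (v + w) mod M = i"
proof -
  have "(v + (i + M - v) mod M) mod M = (v + (i + M - v)) mod M"
    by (simp add: mod_add_right_eq)
  also have "\<dots> = i"
    using assms by simp
  finally show ?thesis
    using assms(1) by (intro exI[of _ "(i + M - v) mod M"]) simp
qed

lemma exists_double_mod_eq:
  fixes i M :: nat
  assumes "odd M" "i < M"
  shows "\<exists>w<M. 2 * w mod M = i"
proof -
  have "2 * (i * ((M + 1) div 2) mod M) mod M = i * (2 * ((M + 1) div 2)) mod M"
    by (simp add: mod_mult_right_eq mult.left_commute)
  also have "\<dots> = (i + i * M) mod M"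
    using assms(1) by (simp add: algebra_simps)
  also have "\<dots> = i"
    using assms(2) by simp
  finally show ?thesis
    using odd_pos[OF assms(1)] by (intro exI[of _ "i * ((M + 1) div 2) mod M"]) simp
qed

text \<open>In \<open>K_M\<close> (\<open>M\<close> odd) the edges \<open>uw\<close> in class \<open>(u + w) mod M\<close> form a near 1-factorisation in
  which vertex \<open>u\<close> misses class \<open>2u mod M\<close>; vertex \<open>M\<close> fills these gaps, and a further vertex
  \<open>M + 1\<close> is joined to \<open>u\<close> in class \<open>u\<close>.\<close>
definition cyclic_class :: "nat \<Rightarrow> nat set \<Rightarrow> nat" where
  "cyclic_class M S =
     (if Max S < M then (Min S + Max S) mod M else if Max S = M then 2 * Min S mod M else Min S)"

lemma cyclic_class_surj:
  assumes "odd M" "N = M + 1 \<or> N = M + 2" "v < N" "i < M"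
  shows "\<exists>w<N. w \<noteq> v \<and> cyclic_class M {v, w} = i"
proof -
  consider "v < M" | "v = M" | "v = M + 1"
    using assms(2,3) by linarith
  then show ?thesis
  proof cases
    case 1
    show ?thesis
    proof (cases "i = 2 * v mod M")
      case True
      then show ?thesis
        using 1 assms(2) by (intro exI[of _ M]) (auto simp: cyclic_class_def)
    next
      case False
      obtain w where w: "w < M" "(v + w) mod M = i"
        using exists_add_mod_eq[OF 1 assms(4)] by blast
      moreover have "w \<noteq> v"
        using False w(2) by (auto simp: mult_2)
      ultimately show ?thesis
        using 1 assms(2) by (intro exI[of _ w]) (auto simp: cyclic_class_def max_def min_def add.commute)
    qed
  next
    case 2
    obtain w where "w < M" "2 * w mod M = i"
      using exists_double_mod_eq[OF assms(1,4)] by blast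
    then show ?thesis
      using 2 assms(2) by (intro exI[of _ w]) (auto simp: cyclic_class_def insert_commute)
  next
    case 3
    then show ?thesis
      using assms(2,4) by (intro exI[of _ i]) (auto simp: cyclic_class_def)
  qed
qed

lemma star_avoidable_cyclic:
  assumes "odd M" "2 \<le> t" "N = M + 1 \<or> N = M + 2" "N \<le> residue_pair_bound t M + n"
  shows "star_avoidable t n N"
proof -
  let ?c = "\<lambda>S. cyclic_class M S mod t"
  have "edge_colouring N t ?c"
    using assms(2) unfolding edge_colouring_def by simp
  moreover have "N \<le> colour_degree ?c N v k1 + colour_degree ?c N v k2 + n"
    if v: "v < N" and k: "k1 < t" "k2 < t" "k1 \<noteq> k2" for v k1 k2
  proof -
    have "1 \<le> card {w. w < N \<and> w \<noteq> v \<and> cyclic_class M {v, w} = i}" if "i < M" for i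
      using cyclic_class_surj[OF assms(1,3) v that] by (auto simp: Suc_le_eq card_gt_0_iff)
    then have "residue_count t M k \<le> colour_degree ?c N v k" for k
      using colour_degree_mod_ge[of M 1 N v "cyclic_class M" t k] by simp
    moreover have "residue_pair_bound t M \<le> residue_count t M k1 + residue_count t M k2"
      using residue_pair_bound_le k assms(2) by simp
    ultimately show ?thesis
      using assms(4) by (meson add_le_mono le_trans add_le_mono1)
  qed
  ultimately show ?thesis
    using assms(2) by (auto simp: star_avoidable_iff_colour_degree_bound)
qed

definition circulant_class :: "nat \<Rightarrow> nat set \<Rightarrow> nat" where
  "circulant_class N S = min (Max S - Min S) (N - (Max S - Min S)) - 1"

lemma circulant_class_pair:
  "circulant_class N {u, w} = min (max u w - min u w) (N - (max u w - min u w)) - 1"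
  by (simp add: circulant_class_def)

lemma circulant_class_two_witnesses:
  assumes "odd N" "v < N" "i < N div 2"
  shows "2 \<le> card {w. w < N \<and> w \<noteq> v \<and> circulant_class N {v, w} = i}"
proof -
  define d where "d = i + 1"
  have d: "0 < d" "2 * d < N"
    using assms(1,3) unfolding d_def by (auto elim: oddE)
  define w1 where "w1 = (if v + d < N then v + d else v + d - N)"
  define w2 where "w2 = (if d \<le> v then v - d else v + N - d)"
  have "circulant_class N {v, w1} = i" "circulant_class N {v, w2} = i"
    using assms(2) d unfolding w1_def w2_def d_def by (auto simp: circulant_class_pair min_def max_def)
  moreover have "w1 < N" "w2 < N" "w1 \<noteq> v" "w2 \<noteq> v" "w1 \<noteq> w2"
    using assms(2) d unfolding w1_def w2_def by auto
  ultimately have "{w1, w2} \<subseteq> {w. w < N \<and> w \<noteq> v \<and> circulant_class N {v, w} = i}"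
    "card {w1, w2} = 2"
    by auto
  then show ?thesis
    using card_mono[of "{w. w < N \<and> w \<noteq> v \<and> circulant_class N {v, w} = i}" "{w1, w2}"] by simp
qed

lemma star_avoidable_circulant:
  assumes "odd N" "2 \<le> t" "N \<le> 2 * residue_pair_bound t (N div 2) + n"
  shows "star_avoidable t n N"
proof -
  let ?c = "\<lambda>S. circulant_class N S mod t"
  have "edge_colouring N t ?c"
    using assms(2) unfolding edge_colouring_def by simp
  moreover have "N \<le> colour_degree ?c N v k1 + colour_degree ?c N v k2 + n"
    if v: "v < N" and k: "k1 < t" "k2 < t" "k1 \<noteq> k2" for v k1 k2
  proof -
    have degree: "2 * residue_count t (N div 2) k \<le> colour_degree ?c N v k" for k
      by (rule colour_degree_mod_ge) (rule circulant_class_two_witnesses[OF assms(1) v])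
    have "residue_pair_bound t (N div 2)
        \<le> residue_count t (N div 2) k1 + residue_count t (N div 2) k2"
      using residue_pair_bound_le k assms(2) by simp
    then show ?thesis
      using degree[of k1] degree[of k2] assms(3) by linarith
  qed
  ultimately show ?thesis
    using assms(2) by (auto simp: star_avoidable_iff_colour_degree_bound)
qed

section \<open>Locating the threshold\<close>

lemma star_avoidable_of_quotient:
  assumes "2 \<le> t" "X \<le> 2 * Q + n" "t * Q + 2 \<le> X \<or> even X \<and> t * Q < X"
  shows "star_avoidable t n X"
proof (cases "even X")
  case True
  then have "X = (X - 1) + 1" "odd (X - 1)"
    using assms(3) by (auto elim: evenE)
  moreover have "2 * Q \<le> residue_pair_bound t (X - 1)"
    using assms(1,3) by (intro residue_pair_bound_ge) auto
  ultimately show ?thesis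
    using assms(1,2) by (intro star_avoidable_cyclic[of "X - 1"]) auto
next
  case False
  then have "X = (X - 2) + 2" "odd (X - 2)"
    using assms(3) by auto
  moreover have "2 * Q \<le> residue_pair_bound t (X - 2)"
    using assms(1,3) False by (intro residue_pair_bound_ge) auto
  ultimately show ?thesis
    using assms(1,2) by (intro star_avoidable_cyclic[of "X - 2"]) auto
qed

lemma star_avoidable_of_half_quotient:
  assumes "2 \<le> t" "odd X" "t * P \<le> X div 2" "X \<le> 4 * P + n"
  shows "star_avoidable t n X"
proof -
  have "2 * P \<le> residue_pair_bound t (X div 2)"
    using assms(1,3) by (intro residue_pair_bound_ge) auto
  then show ?thesis
    using assms by (intro star_avoidable_circulant) auto
qed

lemma star_avoidable_above_quotient:
  assumes "2 \<le> t" "X \<le> 2 * Q + n" "t * Q < X" "X = t * Q + 1 \<Longrightarrow> odd t"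
  shows "star_avoidable t n X"
proof (cases "t * Q + 2 \<le> X \<or> even X")
  case True
  then show ?thesis
    using assms(1-3) by (intro star_avoidable_of_quotient[where Q = Q]) auto
next
  case False
  then have X: "X = t * Q + 1" "odd X"
    using assms(3) by auto
  with assms(4) have "even Q"
    by simp
  then obtain P where "Q = 2 * P"
    by (rule evenE)
  then have "t * P \<le> X div 2" "X \<le> 4 * P + n"
    using X(1) assms(2) by simp_all
  then show ?thesis
    using X(2) assms(1) by (intro star_avoidable_of_half_quotient) simp_all
qed

lemma not_star_avoidable_pred_if_large_slack:
  assumes "2 \<le> t" "X = t * Q + R + 2" "R < t" "n + 2 * Q + 2 \<le> X"
    and "X = n + 2 * Q + 2 \<Longrightarrow> R + 1 < t"
  shows "\<not> star_avoidable t n (X - 1)"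
proof (rule not_star_avoidable_by_counting)
  have X: "2 * (X - 1 - 1) = 2 * (t * Q) + 2 * R"
    using assms(2) by simp
  show "2 * (X - 1 - 1) < t * (X - 1 - n) + (X - 1 - n) mod 2 * (t - 2)"
  proof (cases "X = n + 2 * Q + 2")
    case True
    then have m: "X - 1 - n = 2 * Q + 1"
      by simp
    have "t * (X - 1 - n) = 2 * (t * Q) + t"
      unfolding m by (simp add: algebra_simps)
    moreover have "(X - 1 - n) mod 2 = 1"
      unfolding m by simp
    ultimately show ?thesis
      using X assms(5)[OF True] by simp
  next
    case False
    then have "t * (2 * Q + 2) \<le> t * (X - 1 - n)"
      using assms(4) by (intro mult_le_mono2) simp
    moreover have "t * (2 * Q + 2) = 2 * (t * Q) + 2 * t"
      by (simp add: algebra_simps)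
    ultimately show ?thesis
      using X assms(3) by linarith
  qed
qed (use assms(1,4) in simp_all)

lemma star_threshold_if_slack_one:
  assumes "2 \<le> t" "X = t * Q + R + 2" "R + 2 < t" "X = n + 2 * Q + 1" "1 \<le> R \<or> odd t"
  shows "star_avoidable t n (X - 1) \<and> \<not> star_avoidable t n X"
proof
  show "\<not> star_avoidable t n X"
  proof (rule not_star_avoidable_by_counting)
    have "X - n = 2 * Q + 1"
      using assms(4) by simp
    moreover have "t * (2 * Q + 1) = 2 * (t * Q) + t"
      by (simp add: algebra_simps)
    ultimately show "2 * (X - 1) < t * (X - n) + (X - n) mod 2 * (t - 2)"
      using assms(2,3) by simp
  qed (use assms in simp_all)
  show "star_avoidable t n (X - 1)"
    using assms by (intro star_avoidable_above_quotient[where Q = Q]) auto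
qed

lemma star_threshold_top_residue:
  assumes "4 \<le> t" "X = t * (Q + 1) + 1" "X = n + 2 * Q + 2" "odd X" "even Q"
  shows "star_avoidable t n (X - 1) \<and> \<not> star_avoidable t n X"
proof
  have Xn: "X - n = 2 * (Q + 1)"
    using assms(3) by simp
  show "\<not> star_avoidable t n X"
  proof (rule not_star_avoidable_by_parity)
    show "2 * (X - 1) = t * (X - n)"
      unfolding Xn using assms(2) by simp
    show "odd ((X - n) div 2)"
      unfolding Xn using assms(5) by simp
  qed (use assms(1,3,4) in auto)
  show "star_avoidable t n (X - 1)"
  proof (rule star_avoidable_cyclic)
    have M: "t * Q + (t - 1) = X - 2"
      using assms(1,2) by (simp add: algebra_simps)
    have "2 \<le> X"
      using assms(1,2) by simp
    with assms(4) have "odd (X - 2)"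
      by simp
    then show "odd (t * Q + (t - 1))"
      unfolding M .
    show "X - 1 = t * Q + (t - 1) + 1 \<or> X - 1 = t * Q + (t - 1) + 2"
      unfolding M using \<open>2 \<le> X\<close> by linarith
    have "residue_pair_bound t (t * Q + (t - 1)) = 2 * Q + 1"
      using assms(1) by (intro residue_pair_bound_top) simp
    then show "X - 1 \<le> residue_pair_bound t (t * Q + (t - 1)) + n"
      using assms(3) by linarith
  qed (use assms(1) in simp)
qed

lemma star_avoidable_top_residue:
  assumes "2 \<le> t" "X = t * (Q + 1) + 1" "X = n + 2 * Q + 2" "even X \<or> odd Q"
  shows "star_avoidable t n X"
proof (cases "even X")
  case True
  then show ?thesis
    using assms by (intro star_avoidable_of_quotient[where Q = "Q + 1"]) simp_all
next
  case False
  with assms(4) have "even (Q + 1)"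
    by simp
  then obtain P where "Q + 1 = 2 * P"
    by (rule evenE)
  then have "t * P \<le> X div 2" "X \<le> 4 * P + n"
    using assms(2,3) by simp_all
  then show ?thesis
    using False assms(1) by (intro star_avoidable_of_half_quotient) simp_all
qed

lemma star_threshold_top_residue_iff:
  assumes "4 \<le> t" "X = t * (Q + 1) + 1" "X = n + 2 * Q + 2"
  shows "star_avoidable t n (X - 1) \<and> \<not> star_avoidable t n X \<longleftrightarrow> odd X \<and> even Q"
proof
  assume threshold: "star_avoidable t n (X - 1) \<and> \<not> star_avoidable t n X"
  show "odd X \<and> even Q"
  proof (rule ccontr)
    assume "\<not> (odd X \<and> even Q)"
    then have "star_avoidable t n X"
      using assms(1) by (intro star_avoidable_top_residue[OF _ assms(2,3)]) auto
    with threshold show False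
      by simp
  qed
qed (use star_threshold_top_residue[OF assms] in blast)

text \<open>The last two hypotheses are the floor in the theorem, for \<open>s = t div 2\<close>; they leave only
  three possibilities for the excess of \<open>X - n\<close> over \<open>2Q\<close>.\<close>
lemma slack_cases_even:
  fixes t s X Q R n :: nat
  assumes t: "t = 2 * s" and "2 \<le> s" and X: "X = t * Q + R + 2" and "R < t"
    and lower: "s * (X - n) + 1 \<le> X" and upper: "X + 1 \<le> s * (X - n) + s"
  shows "X - n \<le> 2 * Q \<and> R + 3 \<le> s \<or> X - n = 2 * Q + 1 \<and> s \<le> R + 1 \<and> R + 3 \<le> t
    \<or> X - n = 2 * Q + 2 \<and> R = t - 1"
proof -
  have tQ: "t * Q = 2 * (s * Q)"
    using t by simp
  consider "X - n \<le> 2 * Q" | "X - n = 2 * Q + 1" | "X - n = 2 * Q + 2" | "2 * Q + 3 \<le> X - n"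
    by linarith
  then show ?thesis
  proof cases
    case 1
    then have "s * (X - n) \<le> 2 * (s * Q)"
      using mult_le_mono2[OF 1, of s] by simp
    then show ?thesis
      using 1 upper X tQ by linarith
  next
    case 2
    then have "s * (X - n) = 2 * (s * Q) + s"
      by (simp add: algebra_simps)
    then show ?thesis
      using 2 lower upper X tQ t by linarith
  next
    case 3
    then have "s * (X - n) = 2 * (s * Q) + 2 * s"
      by (simp add: algebra_simps)
    then show ?thesis
      using 3 lower X tQ t assms(4) by linarith
  next
    case 4
    then have "2 * (s * Q) + 3 * s \<le> s * (X - n)"
      using mult_le_mono2[OF 4, of s] by (simp add: algebra_simps)
    then show ?thesis
      using lower X tQ t assms(2,4) by linarith
  qed
qed

lemma slack_cases_odd:
  fixes t s X Q R n :: nat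
  assumes t: "t = 2 * s + 1" and X: "X = t * Q + R + 2"
    and lower: "s * (X - n) + 1 \<le> X" and upper: "X + 1 \<le> s * (X - n) + s"
  shows "X - n \<le> 2 * Q \<and> Q + R + 3 \<le> s \<or> X - n = 2 * Q + 1 \<and> s \<le> Q + R + 1 \<and> Q + R + 3 \<le> 2 * s
    \<or> 2 * Q + 2 \<le> X - n \<and> 2 * s \<le> Q + R + 1"
proof -
  have tQ: "t * Q = 2 * (s * Q) + Q"
    using t by simp
  consider "X - n \<le> 2 * Q" | "X - n = 2 * Q + 1" | "2 * Q + 2 \<le> X - n"
    by linarith
  then show ?thesis
  proof cases
    case 1
    then have "s * (X - n) \<le> 2 * (s * Q)"
      using mult_le_mono2[OF 1, of s] by simp
    then show ?thesis
      using 1 upper X tQ by linarith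
  next
    case 2
    then have "s * (X - n) = 2 * (s * Q) + s"
      by (simp add: algebra_simps)
    then show ?thesis
      using 2 lower upper X tQ by linarith
  next
    case 3
    then have "2 * (s * Q) + 2 * s \<le> s * (X - n)"
      using mult_le_mono2[OF 3, of s] by (simp add: algebra_simps)
    then show ?thesis
      using 3 lower X tQ by linarith
  qed
qed

lemma star_threshold_iff_even:
  assumes t: "t = 2 * s" and "2 \<le> s" and X: "X = t * Q + R + 2" and "R < t" "n \<le> X"
    and "s * (X - n) + 1 \<le> X" "X + 1 \<le> s * (X - n) + s"
  shows "star_avoidable t n (X - 1) \<and> \<not> star_avoidable t n X \<longleftrightarrow>
    (R = t - 1 \<and> odd X \<and> odd (Q + 1)) \<or> (R + 2 < t \<and> t \<le> 2 * R + 4)"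
proof -
  consider "X - n \<le> 2 * Q" "R + 3 \<le> s" | "X - n = 2 * Q + 1" "s \<le> R + 1" "R + 3 \<le> t"
    | "X - n = 2 * Q + 2" "R = t - 1"
    using slack_cases_even[OF assms(1-4,6,7)] by blast
  then show ?thesis
  proof cases
    case 1
    then have "star_avoidable t n X"
      using X assms(2,5) t by (intro star_avoidable_of_quotient[where Q = Q]) simp_all
    then show ?thesis
      using 1 t by auto
  next
    case 2
    then have "star_avoidable t n (X - 1) \<and> \<not> star_avoidable t n X"
      using X assms(2,5) t by (intro star_threshold_if_slack_one[where Q = Q and R = R]) auto
    then show ?thesis
      using 2 t by simp
  next
    case 3
    then have "X = t * (Q + 1) + 1" "odd X" "X = n + 2 * Q + 2"
      using X t assms(2,5) by (simp_all add: algebra_simps)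
    then show ?thesis
      using star_threshold_top_residue_iff[of t X Q n] 3 assms(2) t by auto
  qed
qed

lemma star_threshold_iff_odd:
  assumes t: "t = 2 * s + 1" and "2 \<le> s" and X: "X = t * Q + R + 2" and "R < t" "n \<le> X"
    and "s * (X - n) + 1 \<le> X" "X + 1 \<le> s * (X - n) + s"
  shows "star_avoidable t n (X - 1) \<and> \<not> star_avoidable t n X \<longleftrightarrow>
    (R = t - 1 \<and> odd X \<and> odd (Q + 1)) \<or> (R + 2 < t \<and> Q + R + 3 < t \<and> t \<le> 2 * Q + 2 * R + 5)"
proof -
  have top_residue: "X = t * (Q + 1) + 1" if "R = t - 1"
    using that X t by (simp add: algebra_simps)
  then have no_top: "\<not> (R = t - 1 \<and> odd X \<and> odd (Q + 1))"
    using t by auto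
  consider "X - n \<le> 2 * Q" "Q + R + 3 \<le> s" | "X - n = 2 * Q + 1" "s \<le> Q + R + 1" "Q + R + 3 \<le> 2 * s"
    | "2 * Q + 2 \<le> X - n" "2 * s \<le> Q + R + 1"
    using slack_cases_odd[OF t X assms(6,7)] by blast
  then show ?thesis
  proof cases
    case 1
    then have "star_avoidable t n X"
      using X assms(2,5) t by (intro star_avoidable_of_quotient[where Q = Q]) simp_all
    then show ?thesis
      using 1 t no_top by auto
  next
    case 2
    then have "star_avoidable t n (X - 1) \<and> \<not> star_avoidable t n X"
      using X assms(2,5) t by (intro star_threshold_if_slack_one[where Q = Q and R = R]) auto
    then show ?thesis
      using 2 t by simp
  next
    case 3
    have "\<not> (star_avoidable t n (X - 1) \<and> \<not> star_avoidable t n X)"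
    proof (cases "R = t - 1 \<and> X = n + 2 * Q + 2")
      case True
      then show ?thesis
        using star_threshold_top_residue_iff[of t X Q n] top_residue no_top assms(2) t by auto
    next
      case False
      have "\<not> star_avoidable t n (X - 1)"
        by (rule not_star_avoidable_pred_if_large_slack[where Q = Q and R = R])
          (use 3 X False assms(2,4,5) t in auto)
      then show ?thesis
        by simp
    qed
    then show ?thesis
      using 3 t no_top by auto
  qed
qed

lemma ramsey_star_eq_iff_residue:
  assumes "4 \<le> t" "1 \<le> n" "X = t * Q + R + 2" "R < t" "n \<le> X"
    and "t div 2 * (X - n) + 1 \<le> X" "X + 1 \<le> t div 2 * (X - n) + t div 2"
  shows "ramsey_st (t - 2) t (star_V n) (star_E n) = X \<longleftrightarrow>
    (R = t - 1 \<and> odd X \<and> odd (Q + 1))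
    \<or> (R + 2 < t \<and> t \<le> 2 * R + 4 \<and> even t)
    \<or> (R + 2 < t \<and> Q + R + 3 < t \<and> t \<le> 2 * Q + 2 * R + 5 \<and> odd t)"
    (is "_ \<longleftrightarrow> ?condition")
proof -
  have "ramsey_st (t - 2) t (star_V n) (star_E n) = X \<longleftrightarrow>
      star_avoidable t n (X - 1) \<and> \<not> star_avoidable t n X"
    using assms(1-3) by (intro ramsey_star_eq_iff) simp_all
  also have "\<dots> \<longleftrightarrow> ?condition"
  proof (cases "even t")
    case True
    then have "t = 2 * (t div 2)" "2 \<le> t div 2"
      using assms(1) by auto
    then show ?thesis
      using star_threshold_iff_even[OF _ _ assms(3-7)] True by blast
  next
    case False
    then have "t = 2 * (t div 2) + 1" "2 \<le> t div 2"
      using assms(1) by auto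
    then show ?thesis
      using star_threshold_iff_odd[OF _ _ assms(3-7)] False by blast
  qed
  finally show ?thesis .
qed

lemma floor_quotient_bounds:
  fixes n s :: nat
  assumes "2 \<le> s" "1 \<le> n"
  obtains X where "\<lfloor>(real (n * s) - 1) / (real s - 1)\<rfloor> = int X" "n \<le> X"
    "s * (X - n) + 1 \<le> X" "X + 1 \<le> s * (X - n) + s"
proof -
  define x where "x = \<lfloor>(real (n * s) - 1) / (real s - 1)\<rfloor>"
  have "real_of_int x \<le> (real (n * s) - 1) / (real s - 1)"
    "(real (n * s) - 1) / (real s - 1) < real_of_int x + 1"
    using floor_eq_iff unfolding x_def by blast+
  moreover have "real s - 1 > 0"
    using assms(1) by simp
  ultimately have "real_of_int (x * (int s - 1)) \<le> real_of_int (int n * int s - 1)"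
    "real_of_int (int n * int s - 1) < real_of_int ((x + 1) * (int s - 1))"
    by (simp_all add: pos_le_divide_eq pos_divide_less_eq)
  then have lower: "x * (int s - 1) \<le> int n * int s - 1"
    and upper: "int n * int s - 1 < (x + 1) * (int s - 1)"
    by (simp_all only: of_int_le_iff of_int_less_iff)
  have "int n \<le> x"
  proof (rule ccontr)
    assume "\<not> int n \<le> x"
    then have "(x + 1) * (int s - 1) \<le> int n * (int s - 1)"
      using assms(1) by (intro mult_right_mono) auto
    then show False
      using upper assms(2) by (simp add: algebra_simps)
  qed
  define X where "X = nat x"
  have X: "x = int X" "n \<le> X"
    using \<open>int n \<le> x\<close> unfolding X_def by simp_all
  have "int s * (int X - int n) + 1 \<le> int X" "int X + 1 \<le> int s * (int X - int n) + int s"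
    using lower upper unfolding X(1) by (simp_all add: algebra_simps)
  moreover have "int (s * (X - n)) = int s * (int X - int n)"
    using X(2) by (simp add: of_nat_diff)
  ultimately have "s * (X - n) + 1 \<le> X" "X + 1 \<le> s * (X - n) + s"
    by linarith+
  then show ?thesis
    using that X unfolding x_def by simp
qed

theorem theorem6:
  fixes t n :: nat and x q r :: int
  assumes "t \<ge> 4" and "n \<ge> 1"
    and "x = \<lfloor>(real (n * (t div 2)) - 1) / (real (t div 2) - 1)\<rfloor>"
    and "q = (x - 2) div int t" and "r = (x - 2) mod int t"
  shows "int (ramsey_st (t - 2) t (star_V n) (star_E n)) = x \<longleftrightarrow>
    ((r = int t - 1 \<and> odd x \<and> odd (q + 1))
     \<or> (r < int t - 2 \<and> int t \<le> 2 * r + 4 \<and> even t)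
     \<or> (r < int t - 2 \<and> q + r + 3 < int t \<and> int t \<le> 2 * q + 2 * r + 5 \<and> odd t))"
proof -
  have "2 \<le> t div 2"
    using assms(1) by simp
  then obtain X where floor: "\<lfloor>(real (n * (t div 2)) - 1) / (real (t div 2) - 1)\<rfloor> = int X"
    and X: "n \<le> X" "t div 2 * (X - n) + 1 \<le> X" "X + 1 \<le> t div 2 * (X - n) + t div 2"
    using assms(2) by (rule floor_quotient_bounds)
  have x: "x = int X"
    using assms(3) floor by simp
  show ?thesis
  proof (cases "X = 1")
    case True
    have "star_avoidable t n 1"
      using assms(1,2) by (intro star_avoidable_if_le) simp_all
    then have "ramsey_st (t - 2) t (star_V n) (star_E n) \<noteq> X"
      using True ramsey_star_eq_iff[of t n 1] assms(1,2) by simp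
    moreover have "q = -1" "r = int t - 1"
      using True x assms(1,4,5) by (simp_all add: div_eq_minus1 zmod_minus1)
    ultimately show ?thesis
      using x by simp
  next
    case False
    define Q R where "Q = (X - 2) div t" and "R = (X - 2) mod t"
    have "2 \<le> X"
      using False X(1) assms(2) by simp
    then have XQR: "X = t * Q + R + 2" "R < t" and qr: "q = int Q" "r = int R"
      unfolding Q_def R_def assms(4,5) x using assms(1) by (simp_all add: zdiv_int zmod_int of_nat_diff)
    have "int R = int t - 1 \<longleftrightarrow> R = t - 1" "int R < int t - 2 \<longleftrightarrow> R + 2 < t"
      "int t \<le> 2 * int R + 4 \<longleftrightarrow> t \<le> 2 * R + 4" "int Q + int R + 3 < int t \<longleftrightarrow> Q + R + 3 < t"
      "int t \<le> 2 * int Q + 2 * int R + 5 \<longleftrightarrow> t \<le> 2 * Q + 2 * R + 5"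
      using XQR(2) by linarith+
    then show ?thesis
      using ramsey_star_eq_iff_residue[OF assms(1,2) XQR X] unfolding qr x by simp
  qed
qed

end
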